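(* Let $\lambda=\sum_{i=1}^r m_i\omega_i\in P^+$. Then $V(\lambda)=\sum_{k_1,\dots,k_r\in\mathbb N,\ k_1\le m_1}\mathbf U(\mathfrak n^-_{r-1/2})(x^-_{1,r})^{k_1}\cdots(x^-_{r,r})^{k_r}v_\lambda$.
   Context: $\mathfrak g=\mathfrak{sp}_{2r}$: complex matrices $(a_{i,j})$, indices $1,\dots,r,-r,\dots,-1$, $a_{i,j}=-\mathrm{sgn}(i)\mathrm{sgn}(j)a_{-j,-i}$; $\mathfrak h$ spanned by $E_{i,i}-E_{-i,-i}$, dual basis $\varepsilon_i$; $\omega_i=\varepsilon_1+\dots+\varepsilon_i$, $P^+=\sum\mathbb N\omega_i$. Root vectors: $x^-_{i,j-1}=E_{j,i}-E_{-i,-j}$, $x^-_{i,\overline j}=E_{-j,i}+E_{-i,j}$ ($1\le i<j\le r$), $x^-_{i,\overline i}=E_{-i,i}$, and $x^-_{i,r}:=x^-_{i,\overline r}=E_{-r,i}+E_{-i,r}$ ($i<r$), $x^-_{r,r}=E_{-r,r}$. $\mathfrak n^-_{r-1/2}$ is the span of $x^-_{i,j}$ and $x^-_{i,\overline j}$ for $1\le i\le j<r$. $V(\lambda)$ is the irreducible finite-dimensional $\mathfrak g$-module of highest weight $\lambda$ (with respect to the Borel subalgebra spanned by $\mathfrak h$ and the matrices $x^+_{i,j-1}=E_{i,j}-E_{-j,-i}$, $x^+_{i,\overline j}=E_{i,-j}+E_{j,-i}$, $x^+_{i,\overline i}=E_{i,-i}$), with highest weight vector $v_\lambda$. *)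

theory Defs
  imports "HOL-Analysis.Analysis"
begin

text \<open>Matrices of sp_{2r} are indexed by 1..r, -r..-1, realised as integers i with 1 <= |i| <= r.
  A matrix is a function int => int => complex vanishing outside this index set.\<close>

type_synonym mat = "int \<Rightarrow> int \<Rightarrow> complex"

definition idx :: "nat \<Rightarrow> int set" where
  "idx r = {i. 1 \<le> \<bar>i\<bar> \<and> \<bar>i\<bar> \<le> int r}"

definition Emat :: "int \<Rightarrow> int \<Rightarrow> mat" where
  "Emat a b = (\<lambda>i j. if i = a \<and> j = b then 1 else 0)"

definition madd :: "mat \<Rightarrow> mat \<Rightarrow> mat" where
  "madd A B = (\<lambda>i j. A i j + B i j)"

definition msub :: "mat \<Rightarrow> mat \<Rightarrow> mat" where
  "msub A B = (\<lambda>i j. A i j - B i j)"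

definition sp :: "nat \<Rightarrow> mat set" where
  "sp r = {A. (\<forall>i j. (i \<notin> idx r \<or> j \<notin> idx r) \<longrightarrow> A i j = 0) \<and>
              (\<forall>i\<in>idx r. \<forall>j\<in>idx r. A i j = - of_int (sgn i * sgn j) * A (-j) (-i))}"

definition bracket :: "nat \<Rightarrow> mat \<Rightarrow> mat \<Rightarrow> mat" where
  "bracket r A B = (\<lambda>i j. \<Sum>k\<in>idx r. A i k * B k j - B i k * A k j)"

text \<open>Negative root vectors.  xm i j is x^-_{i,j} = E_{j+1,i} - E_{-i,-(j+1)};
  xmbar i j is x^-_{i,bar j} (= E_{-j,i} + E_{-i,j} for i<j, E_{-i,i} for i=j).\<close>
definition xm :: "int \<Rightarrow> int \<Rightarrow> mat" where
  "xm i j = msub (Emat (j + 1) i) (Emat (-i) (-(j + 1)))"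

definition xmbar :: "int \<Rightarrow> int \<Rightarrow> mat" where
  "xmbar i j = (if i = j then Emat (-i) i else madd (Emat (-j) i) (Emat (-i) j))"

text \<open>x^-_{i,r} := x^-_{i,bar r}.\<close>
definition xr :: "nat \<Rightarrow> nat \<Rightarrow> mat" where
  "xr r i = xmbar (int i) (int r)"

text \<open>Positive root vectors: x^+_{i,j-1} = E_{i,j} - E_{-j,-i} (i<j),
  x^+_{i,bar j} = E_{i,-j} + E_{j,-i} (i<j), x^+_{i,bar i} = E_{i,-i}.\<close>
definition nplus :: "nat \<Rightarrow> mat set" where
  "nplus r = {msub (Emat i j) (Emat (-j) (-i)) | i j. 1 \<le> i \<and> i < j \<and> j \<le> int r}
           \<union> {madd (Emat i (-j)) (Emat j (-i)) | i j. 1 \<le> i \<and> i < j \<and> j \<le> int r}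
           \<union> {Emat i (-i) | i. 1 \<le> i \<and> i \<le> int r}"

definition nminus_half :: "nat \<Rightarrow> mat set" where
  "nminus_half r = {xm i j | i j. 1 \<le> i \<and> i \<le> j \<and> j < int r}
                 \<union> {xmbar i j | i j. 1 \<le> i \<and> i \<le> j \<and> j < int r}"

definition is_rep :: "nat \<Rightarrow> (mat \<Rightarrow> complex^'n^'n) \<Rightarrow> bool" where
  "is_rep r \<rho> \<longleftrightarrow>
     (\<forall>A\<in>sp r. \<forall>B\<in>sp r. \<forall>a b w.
        \<rho> (\<lambda>i j. a * A i j + b * B i j) *v w = a *s (\<rho> A *v w) + b *s (\<rho> B *v w)) \<and>
     (\<forall>A\<in>sp r. \<forall>B\<in>sp r. \<forall>w.
        \<rho> (bracket r A B) *v w = \<rho> A *v (\<rho> B *v w) - \<rho> B *v (\<rho> A *v w))"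

definition invariant_subspace :: "nat \<Rightarrow> (mat \<Rightarrow> complex^'n^'n) \<Rightarrow> (complex^'n) set \<Rightarrow> bool" where
  "invariant_subspace r \<rho> W \<longleftrightarrow> vec.subspace W \<and> (\<forall>A\<in>sp r. \<forall>w\<in>W. \<rho> A *v w \<in> W)"

definition irreducible_rep :: "nat \<Rightarrow> (mat \<Rightarrow> complex^'n^'n) \<Rightarrow> bool" where
  "irreducible_rep r \<rho> \<longleftrightarrow> (\<forall>W. invariant_subspace r \<rho> W \<longrightarrow> W = {0} \<or> W = UNIV)"

text \<open>v is a highest weight vector of weight lambda = sum_i m_i omega_i:
  (E_{jj}-E_{-j,-j}) acts by omega-coefficient sum_{i>=j} m_i, and n^+ kills v.\<close>
definition is_hwv :: "nat \<Rightarrow> (nat \<Rightarrow> nat) \<Rightarrow> (mat \<Rightarrow> complex^'n^'n) \<Rightarrow> complex^'n \<Rightarrow> bool" where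
  "is_hwv r m \<rho> v \<longleftrightarrow> v \<noteq> 0 \<and>
     (\<forall>j\<in>{1..r}. \<rho> (msub (Emat (int j) (int j)) (Emat (- int j) (- int j))) *v v
                   = of_nat (\<Sum>i\<in>{j..r}. m i) *s v) \<and>
     (\<forall>X\<in>nplus r. \<rho> X *v v = 0)"

definition xmono :: "nat \<Rightarrow> (mat \<Rightarrow> complex^'n^'n) \<Rightarrow> (nat \<Rightarrow> nat) \<Rightarrow> complex^'n \<Rightarrow> complex^'n" where
  "xmono r \<rho> k v = foldr (\<lambda>i w. (((*v) (\<rho> (xr r i))) ^^ k i) w) [1..<r+1] v"

text \<open>Action of a PBW-type monomial y_1 ... y_p of U(n) on w.\<close>
definition act_list :: "(mat \<Rightarrow> complex^'n^'n) \<Rightarrow> mat list \<Rightarrow> complex^'n \<Rightarrow> complex^'n" where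
  "act_list \<rho> ys w = foldr (\<lambda>y u. \<rho> y *v u) ys w"

end

theory Submission
  imports Defs
begin

text \<open>Since v generates the irreducible module, V is spanned by words in n^- applied to v. Write
  n^- = n^-_{r-1/2} + span {x^-_{i,r}}: the x^-_{i,r} commute with each other, and brackets
  [x^-_{i,r}, y] with y in n^-_{r-1/2} are again strictly lower triangular, hence act through n^-.
  By induction on words this moves all factors x^-_{i,r} to the right, so V is spanned by
  U(n^-_{r-1/2}) applied to the monomials (x^-_{1,r})^{k_1} ... (x^-_{r,r})^{k_r} v.
  The bound k_1 <= m_1 comes from f = x^-_{1,1} (or x^-_{1,r} itself if r = 1), which together
  with the corresponding positive root vector spans an sl(2) acting on v with weight m_1, so that
  f^{m_1 + 1} v = 0; since [f, x^-_{2,r}] = -x^-_{1,r} and [f, x^-_{1,r}] lies in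
  n^-_{r-1/2}, a power of x^-_{1,r} exceeding m_1 can be traded against powers of f and of
  x^-_{2,r}.\<close>

section \<open>Linear algebra\<close>

lemma matrix_vector_mult_in_span:
  fixes A :: "complex^'n^'n"
  assumes "\<And>s. s \<in> S \<Longrightarrow> A *v s \<in> vec.span T" and "w \<in> vec.span S"
  shows "A *v w \<in> vec.span T"
  using assms(2)
proof (induction rule: vec.span_induct_alt)
  case base then show ?case by (simp add: vec.span_zero)
next
  case (step c x y)
  have "A *v (c *s x + y) = c *s (A *v x) + A *v y"
    by (simp add: matrix_vector_right_distrib vector_scalar_commute)
  then show ?case using step assms(1) by (simp add: vec.span_add vec.span_scale)
qed

lemma eigenvectors_independent:
  fixes H :: "complex^'n^'n"
  assumes "\<And>s. s \<in> S \<Longrightarrow> H *v s = l s *s s" "\<And>s. s \<in> S \<Longrightarrow> s \<noteq> 0" "inj_on l S"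
  shows "finite t \<Longrightarrow> t \<subseteq> S \<Longrightarrow> (\<Sum>s\<in>t. u s *s s) = 0 \<Longrightarrow> s \<in> t \<Longrightarrow> u s = 0"
proof (induction t arbitrary: u s rule: finite_induct)
  case empty then show ?case by simp
next
  case (insert a t)
  have "H *v (\<Sum>s\<in>insert a t. u s *s s) = (\<Sum>s\<in>insert a t. (u s * l s) *s s)"
    unfolding vec.linear_sum[OF matrix_vector_mul_linear_gen] vector_scalar_commute
    using insert.prems(1) assms(1) by (intro sum.cong refl) (auto simp: vec.scale_scale mult.commute)
  moreover have "(\<Sum>s\<in>insert a t. (u s * l s) *s s) - l a *s (\<Sum>s\<in>insert a t. u s *s s)
      = (\<Sum>s\<in>t. (u s * (l s - l a)) *s s)"
    using insert.hyps
    by (simp add: vec.scale_sum_right algebra_simps sum_subtractf[symmetric] vec.scale_left_diff_distrib)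
  ultimately have z: "(\<Sum>s\<in>t. (u s * (l s - l a)) *s s) = 0"
    using insert.prems(2) by simp
  have ut: "u s = 0" if "s \<in> t" for s
  proof -
    have "u s * (l s - l a) = 0" using insert.IH[OF _ z that] insert.prems(1) by auto
    moreover have "l s \<noteq> l a" using assms(3) insert.prems(1) insert.hyps(2) that
      by (metis inj_onD insert_subset subsetD)
    ultimately show ?thesis by simp
  qed
  then have "u a *s a = 0" using insert.prems(2) insert.hyps by simp
  then have "u a = 0" using assms(2) insert.prems(1) by auto
  then show ?case using ut insert.prems(3) by auto
qed

lemma eigenvector_family_has_zero:
  fixes H :: "complex^'n^'n" and U :: "nat \<Rightarrow> complex^'n"
  assumes eigen: "\<And>k. H *v U k = \<mu> k *s U k" and "inj \<mu>"
  shows "\<exists>k. U k = 0"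
proof (rule ccontr)
  assume "\<nexists>k. U k = 0"
  then have nz: "U k \<noteq> 0" for k by auto
  define l where "l s = (SOME c. H *v s = c *s s)" for s
  have lU: "l (U k) = \<mu> k" for k
  proof -
    have "H *v U k = l (U k) *s U k" unfolding l_def by (rule someI, rule eigen)
    then have "(l (U k) - \<mu> k) *s U k = 0" using eigen[of k]
      by (metis diff_self vec.scale_left_diff_distrib)
    then show ?thesis using nz[of k] by simp
  qed
  define S where "S = U ` {..CARD('n)}"
  have "inj_on U {..CARD('n)}"
    by (metis \<open>inj \<mu>\<close> injD inj_onI lU)
  then have cardS: "card S = Suc CARD('n)" unfolding S_def by (simp add: card_image)
  have "vec.independent S"
    unfolding vec.independent_explicit
  proof (intro conjI allI impI ballI)
    show "finite S" unfolding S_def by simp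
    fix c s assume "(\<Sum>v\<in>S. c v *s v) = 0" "s \<in> S"
    moreover have "inj_on l S" unfolding S_def
      by (auto simp: inj_on_def lU dest: injD[OF \<open>inj \<mu>\<close>])
    moreover have "\<And>s. s \<in> S \<Longrightarrow> H *v s = l s *s s" unfolding S_def using lU eigen by auto
    moreover have "\<And>s. s \<in> S \<Longrightarrow> s \<noteq> 0" unfolding S_def using nz by auto
    ultimately show "c s = 0"
      using eigenvectors_independent[of S H l S c s] \<open>finite S\<close> by blast
  qed
  then have "card S \<le> vec.dim S" using vec.independent_bound_general by blast
  also have "\<dots> \<le> CARD('n)" by (rule dim_subset_UNIV_cart_gen)
  finally show False using cardS by simp
qed

definition mvpow :: "complex^'n^'n \<Rightarrow> nat \<Rightarrow> complex^'n \<Rightarrow> complex^'n" where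
  "mvpow M k w = ((*v) M ^^ k) w"

lemma mvpow_0 [simp]: "mvpow M 0 w = w"
  by (simp add: mvpow_def)

lemma mvpow_Suc: "mvpow M (Suc k) w = M *v mvpow M k w"
  by (simp add: mvpow_def)

lemma mvpow_Suc_right: "mvpow M (Suc k) w = mvpow M k (M *v w)"
  by (simp add: mvpow_def funpow_Suc_right del: funpow.simps)

lemma mvpow_add: "mvpow M (a + b) w = mvpow M a (mvpow M b w)"
  by (simp add: mvpow_def funpow_add)

lemma mvpow_plus: "mvpow M k (x + y) = mvpow M k x + mvpow M k y"
  by (induction k) (simp_all add: mvpow_Suc matrix_vector_right_distrib)

lemma mvpow_scale: "mvpow M k (c *s x) = c *s mvpow M k x"
  by (induction k) (simp_all add: mvpow_Suc vector_scalar_commute)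

lemma mvpow_zero: "mvpow M k 0 = 0"
  by (induction k) (simp_all add: mvpow_Suc)

lemma mvpow_vanishes_beyond: "mvpow M n w = 0 \<Longrightarrow> n \<le> k \<Longrightarrow> mvpow M k w = 0"
  using mvpow_add[of M "k - n" n w] by (simp add: mvpow_zero)

lemma mv_mvpow_commute:
  assumes "\<And>w. A *v (B *v w) = B *v (A *v w)"
  shows "A *v mvpow B k w = mvpow B k (A *v w)"
  by (induction k) (simp_all add: mvpow_Suc assms)

lemma mvpow_commute:
  assumes "\<And>w. A *v (B *v w) = B *v (A *v w)"
  shows "mvpow A a (mvpow B b w) = mvpow B b (mvpow A a w)"
  by (induction a) (simp_all add: mvpow_Suc mv_mvpow_commute[OF assms])

lemma mv_mvpow_commutator:
  assumes FY: "\<And>w. F *v (Y *v w) - Y *v (F *v w) = - z w"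
    and Yz: "\<And>w. Y *v (z w) = z (Y *v w)"
  shows "F *v mvpow Y c w = mvpow Y c (F *v w) - of_nat c *s z (mvpow Y (c - 1) w)"
proof (induction c)
  case 0 then show ?case by simp
next
  case (Suc c)
  have "F *v mvpow Y (Suc c) w = Y *v (F *v mvpow Y c w) - z (mvpow Y c w)"
    using FY[of "mvpow Y c w"] by (simp add: mvpow_Suc algebra_simps)
  also have "\<dots> = mvpow Y (Suc c) (F *v w) - of_nat c *s (Y *v z (mvpow Y (c - 1) w)) - z (mvpow Y c w)"
    unfolding Suc by (simp add: matrix_vector_mult_diff_distrib vector_scalar_commute mvpow_Suc)
  also have "of_nat c *s (Y *v z (mvpow Y (c - 1) w)) = of_nat c *s z (mvpow Y c w)"
    by (cases c) (simp_all add: Yz mvpow_Suc)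
  finally show ?case by (simp add: algebra_simps vec.scale_left_distrib)
qed

definition mvmono :: "('i \<Rightarrow> complex^'n^'n) \<Rightarrow> ('i \<Rightarrow> nat) \<Rightarrow> 'i list \<Rightarrow> complex^'n \<Rightarrow> complex^'n" where
  "mvmono A k L v = foldr (\<lambda>j w. mvpow (A j) (k j) w) L v"

lemma mvmono_Nil [simp]: "mvmono A k [] v = v"
  by (simp add: mvmono_def)

lemma mvmono_Cons [simp]: "mvmono A k (j # L) v = mvpow (A j) (k j) (mvmono A k L v)"
  by (simp add: mvmono_def)

lemma mvmono_zero: "mvmono A k L 0 = 0"
  by (induction L) (simp_all add: mvpow_zero)

lemma mvmono_0: "mvmono A (\<lambda>_. 0) L v = v"
  by (induction L) simp_all

lemma mvmono_cong: "(\<And>j. j \<in> set L \<Longrightarrow> k j = k' j) \<Longrightarrow> mvmono A k L v = mvmono A k' L v"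
  by (induction L) simp_all

lemma mv_mvmono_shift:
  assumes "distinct L" "i \<in> set L"
    and comm: "\<And>j w. j \<in> set L \<Longrightarrow> A i *v (A j *v w) = A j *v (A i *v w)"
  shows "A i *v mvmono A k L v = mvmono A (k(i := Suc (k i))) L v"
  using assms
proof (induction L)
  case Nil then show ?case by simp
next
  case (Cons j L)
  show ?case
  proof (cases "j = i")
    case True
    then have "mvmono A (k(i := Suc (k i))) L v = mvmono A k L v"
      using Cons.prems by (intro mvmono_cong) auto
    then show ?thesis unfolding True mvmono_Cons fun_upd_same mvpow_Suc by (simp only:)
  next
    case False
    then have "A i *v mvmono A k (j # L) v = mvpow (A j) (k j) (A i *v mvmono A k L v)"
      using mv_mvpow_commute[of "A i" "A j"] Cons.prems(3) by simp
    also have "\<dots> = mvmono A (k(i := Suc (k i))) (j # L) v"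
      using Cons.IH Cons.prems False by (simp add: fun_upd_other del: fun_upd_apply)
    finally show ?thesis .
  qed
qed

lemma mvpow_mvmono_commute:
  assumes "\<And>j w. j \<in> set L \<Longrightarrow> F *v (A j *v w) = A j *v (F *v w)"
  shows "mvpow F n (mvmono A k L v) = mvmono A k L (mvpow F n v)"
  using assms
proof (induction L)
  case Nil then show ?case by simp
next
  case (Cons j L)
  have "mvpow F n (mvpow (A j) (k j) u) = mvpow (A j) (k j) (mvpow F n u)" for u
    by (rule mvpow_commute) (use Cons.prems in auto)
  then show ?case using Cons by simp
qed

section \<open>Two abstract commutation arguments\<close>

lemma sl2_lowering_weight:
  fixes F H :: "complex^'n^'n"
  assumes HF: "\<And>w. H *v (F *v w) - F *v (H *v w) = (-2) *s (F *v w)"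
    and Hu: "H *v u = of_nat n *s u"
  shows "H *v mvpow F k u = (of_nat n - 2 * of_nat k) *s mvpow F k u"
proof (induction k)
  case 0 then show ?case using Hu by simp
next
  case (Suc k)
  have "H *v mvpow F (Suc k) u = F *v (H *v mvpow F k u) + (-2) *s mvpow F (Suc k) u"
    using HF[of "mvpow F k u"] by (simp add: mvpow_Suc diff_eq_eq)
  also have "\<dots> = ((of_nat n - 2 * of_nat k) + (-2)) *s mvpow F (Suc k) u"
    unfolding Suc vector_scalar_commute mvpow_Suc by (rule vec.scale_left_distrib[symmetric])
  finally show ?case by (simp add: algebra_simps)
qed

lemma sl2_raising_lowering:
  fixes E F H :: "complex^'n^'n"
  assumes EF: "\<And>w. E *v (F *v w) - F *v (E *v w) = H *v w"
    and HF: "\<And>w. H *v (F *v w) - F *v (H *v w) = (-2) *s (F *v w)"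
    and Eu: "E *v u = 0" and Hu: "H *v u = of_nat n *s u"
  shows "E *v mvpow F (Suc k) u = (of_nat (Suc k) * (of_nat n - of_nat k)) *s mvpow F k u"
proof (induction k)
  case 0 then show ?case using EF[of u] Eu Hu by (simp add: mvpow_Suc)
next
  case (Suc k)
  have "E *v mvpow F (Suc (Suc k)) u = F *v (E *v mvpow F (Suc k) u) + H *v mvpow F (Suc k) u"
    using EF[of "mvpow F (Suc k) u"] by (simp add: mvpow_Suc diff_eq_eq)
  also have "\<dots> = (of_nat (Suc k) * (of_nat n - of_nat k) + (of_nat n - 2 * of_nat (Suc k)))
      *s mvpow F (Suc k) u"
    unfolding Suc vector_scalar_commute sl2_lowering_weight[OF HF Hu] mvpow_Suc[symmetric]
    by (rule vec.scale_left_distrib[symmetric])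
  finally show ?case by (simp add: algebra_simps)
qed

lemma sl2_lowering_nilpotent:
  fixes E F H :: "complex^'n^'n"
  assumes EF: "\<And>w. E *v (F *v w) - F *v (E *v w) = H *v w"
    and HF: "\<And>w. H *v (F *v w) - F *v (H *v w) = (-2) *s (F *v w)"
    and Eu: "E *v u = 0" and Hu: "H *v u = of_nat n *s u"
  shows "mvpow F (Suc n) u = 0"
proof -
  \<comment> \<open>The vectors F^k u have pairwise distinct weights n - 2k, so one of them vanishes.\<close>
  obtain K where K: "mvpow F K u = 0"
    using eigenvector_family_has_zero[of H "\<lambda>k. mvpow F k u" "\<lambda>k. of_nat n - 2 * of_nat k"]
      sl2_lowering_weight[OF HF Hu] by (auto simp: inj_def)
  have descend: "mvpow F (Suc n + j) u = 0" if "mvpow F (Suc n + Suc j) u = 0" for j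
  proof -
    have "(of_nat (Suc (Suc n + j)) * (of_nat n - of_nat (Suc n + j)) :: complex) \<noteq> 0"
      by (simp del: of_nat_Suc of_nat_add add: of_nat_add[symmetric])
    moreover have "(of_nat (Suc (Suc n + j)) * (of_nat n - of_nat (Suc n + j)) :: complex)
        *s mvpow F (Suc n + j) u = 0"
      using sl2_raising_lowering[OF EF HF Eu Hu, of "Suc n + j"] that by simp
    ultimately show ?thesis by simp
  qed
  have "mvpow F (Suc n + (K - d)) u = 0" for d
  proof (induction d)
    case 0 then show ?case using mvpow_vanishes_beyond[OF K] by simp
  next
    case (Suc d)
    then show ?case
      using descend[of "K - Suc d"] by (cases "d < K") (simp_all add: Suc_diff_Suc)
  qed
  from this[of K] show ?thesis by simp
qed

context
  fixes F G X1 X2 :: "complex^'n^'n" and \<gamma> :: complex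
  assumes F_X2: "\<And>w. F *v (X2 *v w) - X2 *v (F *v w) = - (X1 *v w)"
    and F_X1: "\<And>w. F *v (X1 *v w) - X1 *v (F *v w) = - (\<gamma> *s (G *v w))"
    and X1_X2: "\<And>w. X1 *v (X2 *v w) = X2 *v (X1 *v w)"
    and G_X1: "\<And>w. G *v (X1 *v w) = X1 *v (G *v w)"
begin

lemma raising_monomial_mult_F:
  "mvpow X1 a (mvpow X2 c (F *v w)) = F *v mvpow X1 a (mvpow X2 c w)
     + (of_nat a * \<gamma>) *s (G *v mvpow X1 (a - 1) (mvpow X2 c w))
     + of_nat c *s mvpow X1 (Suc a) (mvpow X2 (c - 1) w)"
proof -
  have F_X2c: "mvpow X2 c (F *v u) = F *v mvpow X2 c u + of_nat c *s (X1 *v mvpow X2 (c - 1) u)" for u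
    using mv_mvpow_commutator[OF F_X2, of c u] by (simp add: X1_X2 algebra_simps)
  have F_X1a: "mvpow X1 a (F *v u) = F *v mvpow X1 a u + of_nat a *s (\<gamma> *s (G *v mvpow X1 (a - 1) u))" for u
    using mv_mvpow_commutator[where z = "\<lambda>w. \<gamma> *s (G *v w)", OF F_X1, of a u]
    by (simp add: vector_scalar_commute G_X1 algebra_simps)
  show ?thesis
    unfolding F_X2c mvpow_plus mvpow_scale F_X1a mvpow_Suc_right
    by (simp add: vec.scale_scale)
qed

text \<open>The identity above, read at exponent c + 1 of X2, expresses X1^(a+1) X2^c F^b v through
  terms with fewer factors X1 or more factors F; as F^(N+1) v = 0 this recursion terminates in the
  monomials with at most N factors X1.\<close>

lemma raising_monomials_in_subspace:
  assumes W: "vec.subspace W" and WF: "\<And>w. w \<in> W \<Longrightarrow> F *v w \<in> W"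
    and WG: "\<And>w. w \<in> W \<Longrightarrow> G *v w \<in> W"
    and F_nil: "mvpow F (Suc N) v = 0"
    and base: "\<And>a c. a \<le> N \<Longrightarrow> mvpow X1 a (mvpow X2 c v) \<in> W"
  shows "mvpow X1 a (mvpow X2 c v) \<in> W"
proof -
  define T where "T a c b = mvpow X1 a (mvpow X2 c (mvpow F b v))" for a c b
  have T_Suc: "T a c (Suc b) = F *v T a c b + (of_nat a * \<gamma>) *s (G *v T (a - 1) c b)
      + of_nat c *s T (Suc a) (c - 1) b" for a c b
    unfolding T_def mvpow_Suc[of F] by (rule raising_monomial_mult_F)
  have W_add: "x \<in> W \<Longrightarrow> y \<in> W \<Longrightarrow> x + y \<in> W"
    and W_diff: "x \<in> W \<Longrightarrow> y \<in> W \<Longrightarrow> x - y \<in> W"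
    and W_scale: "x \<in> W \<Longrightarrow> t *s x \<in> W" for x y t
    using W vec.subspace_add vec.subspace_diff vec.subspace_scale by blast+
  have low: "T a c b \<in> W" if "a + b \<le> N" for a b c
    using that
  proof (induction b arbitrary: a c)
    case 0 then show ?case using base unfolding T_def by simp
  next
    case (Suc b)
    then show ?case unfolding T_Suc by (intro W_add W_scale WF WG) auto
  qed
  have "T a c b \<in> W" for a b c
  proof (induction a arbitrary: b c rule: less_induct)
    case (less a)
    consider "N < b" | "a + b \<le> N" | a' where "a = Suc a'" "b \<le> N"
      by (cases a; cases "N < b") auto
    then show ?case
    proof cases
      case 1
      then have "T a c b = 0"
        unfolding T_def using mvpow_vanishes_beyond[OF F_nil, of b] by (simp add: mvpow_zero)
      then show ?thesis using W vec.subspace_0 by simp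
    next
      case 2 then show ?thesis by (rule low)
    next
      case 3
      have "of_nat (Suc c) *s T a c b = T a' (Suc c) (Suc b) - F *v T a' (Suc c) b
          - (of_nat a' * \<gamma>) *s (G *v T (a' - 1) (Suc c) b)"
        unfolding T_Suc 3 by (simp add: algebra_simps vec.scale_left_distrib)
      also have "\<dots> \<in> W" using less 3 by (intro W_diff WF WG W_scale) auto
      finally have "inverse (of_nat (Suc c)) *s (of_nat (Suc c) *s T a c b) \<in> W" by (rule W_scale)
      then show ?thesis by (simp add: vec.scale_scale del: of_nat_Suc)
    qed
  qed
  from this[of a c 0] show ?thesis unfolding T_def by simp
qed

end

section \<open>The Lie algebra sp(2r) and its triangular decomposition\<close>

definition mscale :: "complex \<Rightarrow> mat \<Rightarrow> mat" where
  "mscale c A = (\<lambda>i j. c * A i j)"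

definition Esp :: "int \<Rightarrow> int \<Rightarrow> mat" where
  "Esp p q = (\<lambda>i j. Emat p q i j - of_int (sgn p * sgn q) * Emat (-q) (-p) i j)"

text \<open>The order 1 < 2 < ... < r < -r < ... < -1 of the indices: Esp p q lies in n^+ if p precedes q
  and in n^- if q precedes p.\<close>

definition idx_rank :: "nat \<Rightarrow> int \<Rightarrow> int" where
  "idx_rank r p = (if p > 0 then p else 2 * int r + 1 + p)"

definition strictly_lower :: "nat \<Rightarrow> mat \<Rightarrow> bool" where
  "strictly_lower r A \<longleftrightarrow>
     (\<forall>p q. p \<in> idx r \<longrightarrow> q \<in> idx r \<longrightarrow> idx_rank r p \<le> idx_rank r q \<longrightarrow> A p q = 0)"

definition nminus :: "nat \<Rightarrow> mat set" where
  "nminus r = nminus_half r \<union> {xr r i | i. 1 \<le> i \<and> i \<le> r}"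

definition xpbar :: "int \<Rightarrow> int \<Rightarrow> mat" where
  "xpbar i j = (if i = j then Emat i (-i) else madd (Emat i (-j)) (Emat j (-i)))"

definition hdiag :: "nat \<Rightarrow> mat" where
  "hdiag j = msub (Emat (int j) (int j)) (Emat (- int j) (- int j))"

lemma madd_comm: "madd A B = madd B A"
  by (auto simp: madd_def fun_eq_iff)

lemma madd_self_eq_mscale: "madd A A = mscale 2 A"
  by (auto simp: madd_def mscale_def fun_eq_iff)

lemma mscale_one: "mscale 1 A = A"
  by (auto simp: mscale_def fun_eq_iff)

lemma sp_lincomb: "A \<in> sp r \<Longrightarrow> B \<in> sp r \<Longrightarrow> (\<lambda>i j. a * A i j + b * B i j) \<in> sp r"
  unfolding sp_def by (auto simp: algebra_simps)

lemma sp_zero: "(\<lambda>i j. 0) \<in> sp r"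
  unfolding sp_def by auto

lemma sp_mscale: "A \<in> sp r \<Longrightarrow> mscale c A \<in> sp r"
  unfolding sp_def mscale_def by (auto simp: algebra_simps)

lemma sp_sum: "finite F \<Longrightarrow> (\<And>t. t \<in> F \<Longrightarrow> A t \<in> sp r) \<Longrightarrow> (\<lambda>i j. \<Sum>t\<in>F. c t * A t i j) \<in> sp r"
proof (induction F rule: finite_induct)
  case empty then show ?case by (simp add: sp_zero)
next
  case (insert x F)
  have "(\<lambda>i j. c x * A x i j + 1 * (\<Sum>t\<in>F. c t * A t i j)) \<in> sp r"
    using insert by (intro sp_lincomb) auto
  then show ?case using insert.hyps by simp
qed

lemma idx_iff: "(i \<in> idx r) = (1 \<le> \<bar>i\<bar> \<and> \<bar>i\<bar> \<le> int r)"
  unfolding idx_def by simp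

lemma idx_neg[simp]: "(- i \<in> idx r) = (i \<in> idx r)"
  unfolding idx_def by auto

lemma idx_nonzero: "i \<in> idx r \<Longrightarrow> i \<noteq> 0"
  unfolding idx_def by auto

lemma sgn_times_sgn: "i \<noteq> (0::int) \<Longrightarrow> (of_int (sgn i) :: complex) * of_int (sgn i) = 1"
  by (cases "i > 0") (auto simp: sgn_if)

lemma sum_idx_reflect: "(\<Sum>k\<in>idx r. f k) = (\<Sum>k\<in>idx r. f (- k))"
  by (rule sum.reindex_bij_witness[of _ uminus uminus]) auto

lemma sp_symmetry: "A \<in> sp r \<Longrightarrow> i \<in> idx r \<Longrightarrow> j \<in> idx r \<Longrightarrow> A i j = - of_int (sgn i * sgn j) * A (-j) (-i)"
  unfolding sp_def by blast

lemma sp_vanish: "A \<in> sp r \<Longrightarrow> i \<notin> idx r \<or> j \<notin> idx r \<Longrightarrow> A i j = 0"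
  unfolding sp_def by blast

lemma sign_conj_product: "(z::complex) * z = 1 \<Longrightarrow> (-(x*z)*a)*(-(z*y)*b) - (-(x*z)*c)*(-(z*y)*d) = y*x*(b*a - d*c)"
proof -
  assume z: "z * z = 1"
  have "(-(x*z)*a)*(-(z*y)*b) - (-(x*z)*c)*(-(z*y)*d) = (z*z) * (y*x*(b*a - d*c))"
    by (simp add: algebra_simps)
  then show ?thesis using z by simp
qed

lemma sign_involution_solve: "(w::complex) * w = 1 \<Longrightarrow> Y = - w * X \<Longrightarrow> X = - w * Y"
proof -
  assume "w * w = 1" "Y = - w * X"
  then have "- w * Y = (w * w) * X" by (simp add: algebra_simps)
  then show ?thesis using \<open>w * w = 1\<close> by simp
qed

lemma sp_bracket:
  assumes A: "A \<in> sp r" and B: "B \<in> sp r"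
  shows "bracket r A B \<in> sp r"
  unfolding sp_def mem_Collect_eq
proof (intro conjI allI impI ballI)
  fix i j assume "i \<notin> idx r \<or> j \<notin> idx r"
  then show "bracket r A B i j = 0" unfolding bracket_def
    using sp_vanish[OF A] sp_vanish[OF B] by (auto intro!: sum.neutral)
next
  fix i j assume i: "i \<in> idx r" and j: "j \<in> idx r"
  let ?s = "\<lambda>x. (of_int (sgn x) :: complex)"
  have tm: "A (-j) (-k) * B (-k) (-i) - B (-j) (-k) * A (-k) (-i)
      = ?s i * ?s j * (B i k * A k j - A i k * B k j)" if k: "k \<in> idx r" for k
  proof -
    have a1: "A (-j) (-k) = - (?s j * ?s k) * A k j" using sp_symmetry[OF A, of "-j" "-k"] i j k by (simp add: sgn_minus)
    have b1: "B (-k) (-i) = - (?s k * ?s i) * B i k" using sp_symmetry[OF B, of "-k" "-i"] i j k by (simp add: sgn_minus)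
    have b2: "B (-j) (-k) = - (?s j * ?s k) * B k j" using sp_symmetry[OF B, of "-j" "-k"] i j k by (simp add: sgn_minus)
    have a2: "A (-k) (-i) = - (?s k * ?s i) * A i k" using sp_symmetry[OF A, of "-k" "-i"] i j k by (simp add: sgn_minus)
    have kk: "?s k * ?s k = 1" using sgn_times_sgn idx_nonzero k by blast
    show ?thesis unfolding a1 b1 a2 b2 by (rule sign_conj_product[OF kk])
  qed
  have "bracket r A B (-j) (-i) = (\<Sum>k\<in>idx r. A (-j) (-k) * B (-k) (-i) - B (-j) (-k) * A (-k) (-i))"
    unfolding bracket_def by (subst sum_idx_reflect) simp
  also have "\<dots> = (\<Sum>k\<in>idx r. ?s i * ?s j * (- (A i k * B k j - B i k * A k j)))"
    by (rule sum.cong[OF refl]) (simp add: tm)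
  also have "\<dots> = ?s i * ?s j * (- bracket r A B i j)"
    unfolding bracket_def sum_distrib_left[symmetric] sum_negf ..
  finally have eq: "bracket r A B (-j) (-i) = - (?s i * ?s j) * bracket r A B i j" by simp
  have ww: "?s i * ?s j * (?s i * ?s j) = 1"
  proof -
    have "?s i * ?s j * (?s i * ?s j) = (?s i * ?s i) * (?s j * ?s j)" by (simp only: mult_ac)
    then show ?thesis using sgn_times_sgn[OF idx_nonzero[OF i]] sgn_times_sgn[OF idx_nonzero[OF j]] by simp
  qed
  show "bracket r A B i j = - of_int (sgn i * sgn j) * bracket r A B (- j) (- i)"
    unfolding of_int_mult by (rule sign_involution_solve[OF ww eq])
qed

lemma bracket_madd_left: "bracket r (madd A B) C = madd (bracket r A C) (bracket r B C)"
  unfolding bracket_def madd_def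
  by (intro ext) (simp only: sum.distrib[symmetric], rule sum.cong[OF refl], simp add: algebra_simps)

lemma bracket_msub_left: "bracket r (msub A B) C = msub (bracket r A C) (bracket r B C)"
  unfolding bracket_def msub_def
  by (intro ext) (simp only: sum_subtractf[symmetric], rule sum.cong[OF refl], simp add: algebra_simps)

lemma bracket_madd_right: "bracket r C (madd A B) = madd (bracket r C A) (bracket r C B)"
  unfolding bracket_def madd_def
  by (intro ext) (simp only: sum.distrib[symmetric], rule sum.cong[OF refl], simp add: algebra_simps)

lemma bracket_msub_right: "bracket r C (msub A B) = msub (bracket r C A) (bracket r C B)"
  unfolding bracket_def msub_def
  by (intro ext) (simp only: sum_subtractf[symmetric], rule sum.cong[OF refl], simp add: algebra_simps)

lemma finite_idx[simp]: "finite (idx r)"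
  by (rule finite_subset[of _ "{- int r..int r}"]) (auto simp: idx_def)

lemma bracket_Emat:
  assumes "b \<in> idx r" "d \<in> idx r"
  shows "bracket r (Emat a b) (Emat c d) =
    (\<lambda>i j. (if i = a \<and> b = c \<and> j = d then 1 else 0) - (if i = c \<and> d = a \<and> j = b then 1 else 0))"
proof (rule ext, rule ext)
  fix i j
  have "bracket r (Emat a b) (Emat c d) i j =
     (\<Sum>k\<in>idx r. (if k = b then (if i = a \<and> b = c \<and> j = d then 1 else 0) else 0)
               - (if k = d then (if i = c \<and> d = a \<and> j = b then 1 else 0) else 0))"
    unfolding bracket_def by (rule sum.cong[OF refl]) (cases "i = a"; cases "j = d"; cases "i = c"; cases "j = b"; auto simp: Emat_def)
  also have "\<dots> = (if i = a \<and> b = c \<and> j = d then 1 else 0) - (if i = c \<and> d = a \<and> j = b then 1 else 0)"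
    by (simp only: sum_subtractf sum.delta[OF finite_idx] assms if_True)
  finally show "bracket r (Emat a b) (Emat c d) i j = \<dots>" .
qed

lemmas bracket_simps = bracket_madd_left bracket_msub_left bracket_madd_right bracket_msub_right bracket_Emat

lemma Emat_nonzero: "Emat a b i j \<noteq> 0 \<Longrightarrow> i = a \<and> j = b"
  unfolding Emat_def by (simp split: if_splits)

lemma Emat_pair: "Emat p q i j = (if (p, q) = (i, j) then 1 else 0)"
  unfolding Emat_def by auto

lemma msub_nonzero: "msub A B p q \<noteq> 0 \<Longrightarrow> A p q \<noteq> 0 \<or> B p q \<noteq> 0"
  unfolding msub_def by auto

lemma madd_nonzero: "madd A B p q \<noteq> 0 \<Longrightarrow> A p q \<noteq> 0 \<or> B p q \<noteq> 0"
  unfolding madd_def by auto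

lemma sign_involution_diff: "(w::complex) * w = 1 \<Longrightarrow> 1 - w * B = - w * (B - w * 1)"
proof -
  assume "w * w = 1"
  moreover have "- w * (B - w * 1) = w * w - w * B" by (simp add: algebra_simps)
  ultimately show ?thesis by simp
qed

lemma Esp_in_sp:
  assumes "p \<in> idx r" "q \<in> idx r"
  shows "Esp p q \<in> sp r"
  unfolding sp_def mem_Collect_eq
proof (intro conjI allI impI ballI)
  fix i j assume "i \<notin> idx r \<or> j \<notin> idx r"
  then have A: "\<not> (i = p \<and> j = q)" and B: "\<not> (i = -q \<and> j = -p)" using assms by auto
  have "Esp p q i j = (if i = p \<and> j = q then 1 else 0) - of_int (sgn p * sgn q) * (if i = -q \<and> j = -p then 1 else 0)"
    unfolding Esp_def Emat_def by simp
  also have "\<dots> = 0" by (simp only: if_not_P[OF A] if_not_P[OF B]) simp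
  finally show "Esp p q i j = 0" .
next
  fix i j assume ij: "i \<in> idx r" "j \<in> idx r"
  have nz: "i \<noteq> 0" "j \<noteq> 0" "p \<noteq> 0" "q \<noteq> 0" using assms ij idx_nonzero by auto
  have ww: "sgn p * sgn q * (sgn p * sgn q) = (1::int)"
    using nz by (auto simp: sgn_if)
  have ww': "(of_int (sgn p * sgn q) :: complex) * of_int (sgn p * sgn q) = 1"
    by (metis ww of_int_1 of_int_mult)
  have e1: "Esp p q i j = (if i = p \<and> j = q then 1 else 0) - of_int (sgn p * sgn q) * (if i = -q \<and> j = -p then 1 else 0)"
    unfolding Esp_def Emat_def by simp
  have e2: "Esp p q (-j) (-i) = (if i = -q \<and> j = -p then 1 else 0) - of_int (sgn p * sgn q) * (if i = p \<and> j = q then 1 else 0)"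
    unfolding Esp_def Emat_def by auto
  show "Esp p q i j = - of_int (sgn i * sgn j) * Esp p q (- j) (- i)"
  proof (cases "i = p \<and> j = q")
    case True
    then have s: "sgn i * sgn j = sgn p * sgn q" by simp
    show ?thesis unfolding e1 e2 s by (simp only: if_P[OF True] sign_involution_diff[OF ww'])
  next
    case False
    show ?thesis
    proof (cases "i = -q \<and> j = -p")
      case True
      then have s: "sgn i * sgn j = sgn p * sgn q" by (simp add: sgn_minus)
      show ?thesis unfolding e1 e2 s by (simp only: if_P[OF True] if_not_P[OF False]) simp
    next
      case False2: False
      show ?thesis unfolding e1 e2 by (simp only: if_not_P[OF False2] if_not_P[OF False]) simp
    qed
  qed
qed

lemma Esp_pos_pos: "p > 0 \<Longrightarrow> q > 0 \<Longrightarrow> Esp p q = msub (Emat p q) (Emat (-q) (-p))"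
  by (auto simp: fun_eq_iff Esp_def msub_def)

lemma Esp_neg_neg: "p < 0 \<Longrightarrow> q < 0 \<Longrightarrow> Esp p q = mscale (-1) (msub (Emat (-q) (-p)) (Emat p q))"
  by (auto simp: fun_eq_iff Esp_def msub_def mscale_def)

lemma Esp_pos_neg: "p > 0 \<Longrightarrow> q < 0 \<Longrightarrow> Esp p q = madd (Emat p q) (Emat (-q) (-p))"
  by (auto simp: fun_eq_iff Esp_def madd_def)

lemma Esp_neg_pos: "p < 0 \<Longrightarrow> q > 0 \<Longrightarrow> Esp p q = madd (Emat p q) (Emat (-q) (-p))"
  by (auto simp: fun_eq_iff Esp_def madd_def)

lemma mult_indicator_diff: "(c::complex) * ((if A then 1 else 0) - w * (if B then 1 else 0)) = (if A then c else 0) - (if B then c * w else 0)"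
  by (cases A; cases B) (auto simp: right_diff_distrib)

lemma sp_Esp_expansion:
  assumes z: "z \<in> sp r"
  shows "z = (\<lambda>i j. \<Sum>x\<in>idx r \<times> idx r. (z (fst x) (snd x) / 2) * Esp (fst x) (snd x) i j)"
proof (intro ext)
  fix i j
  let ?w = "\<lambda>x. (of_int (sgn (fst x) * sgn (snd x)) :: complex)"
  have "(\<Sum>x\<in>idx r \<times> idx r. (z (fst x) (snd x) / 2) * Esp (fst x) (snd x) i j)
     = (\<Sum>x\<in>idx r \<times> idx r. (if x = (i, j) then z (fst x) (snd x) / 2 else 0))
       - (\<Sum>x\<in>idx r \<times> idx r. (if x = (-j, -i) then z (fst x) (snd x) / 2 * ?w x else 0))"
    unfolding sum_subtractf[symmetric]
  proof (rule sum.cong[OF refl])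
    fix x :: "int \<times> int"
    obtain p q where x: "x = (p, q)" by fastforce
    have "(p, q) = (i, j) \<longleftrightarrow> x = (i, j)" using x by simp
    moreover have "(-q, -p) = (i, j) \<longleftrightarrow> x = (-j, -i)" unfolding x prod.inject by presburger
    ultimately show "z (fst x) (snd x) / 2 * Esp (fst x) (snd x) i j =
         (if x = (i, j) then z (fst x) (snd x) / 2 else 0) - (if x = (- j, - i) then z (fst x) (snd x) / 2 * ?w x else 0)"
      unfolding Esp_def Emat_pair x fst_conv snd_conv
      by (simp only: \<open>(p, q) = (i, j) \<longleftrightarrow> x = (i, j)\<close> \<open>(-q, -p) = (i, j) \<longleftrightarrow> x = (-j, -i)\<close> mult_indicator_diff)
  qed
  also have "\<dots> = (if (i, j) \<in> idx r \<times> idx r then z i j / 2 else 0)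
      - (if (-j, -i) \<in> idx r \<times> idx r then z (-j) (-i) / 2 * of_int (sgn (-j) * sgn (-i)) else 0)"
    by (simp only: sum.delta[OF finite_cartesian_product[OF finite_idx finite_idx]] fst_conv snd_conv)
  also have "\<dots> = z i j"
  proof (cases "i \<in> idx r \<and> j \<in> idx r")
    case True
    have s: "(of_int (sgn (-j) * sgn (-i)) :: complex) = of_int (sgn i * sgn j)" by (simp add: sgn_minus)
    have zz: "z (-j) (-i) = - of_int (sgn i * sgn j) * z i j"
      using sp_symmetry[OF z, of "-j" "-i"] True by (simp add: sgn_minus mult.commute)
    have ww: "(of_int (sgn i * sgn j) :: complex) * of_int (sgn i * sgn j) = 1"
    proof -
      have "(of_int (sgn i * sgn j) :: complex) * of_int (sgn i * sgn j)
          = (of_int (sgn i) * of_int (sgn i)) * (of_int (sgn j) * of_int (sgn j))"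
        by (simp only: of_int_mult mult_ac)
      moreover have "(of_int (sgn i) :: complex) * of_int (sgn i) = 1" using True idx_nonzero sgn_times_sgn by blast
      moreover have "(of_int (sgn j) :: complex) * of_int (sgn j) = 1" using True idx_nonzero sgn_times_sgn by blast
      ultimately show ?thesis by (simp only: mult_1_right)
    qed
    have "z i j / 2 - z (-j) (-i) / 2 * of_int (sgn i * sgn j) = z i j / 2 + z i j / 2 * (of_int (sgn i * sgn j) * of_int (sgn i * sgn j))"
      unfolding zz by (simp add: algebra_simps)
    also have "\<dots> = z i j" using ww by simp
    finally show ?thesis using True by (simp only: s mem_Sigma_iff idx_neg if_True simp_thms)
  next
    case False
    then have "z i j = 0" using sp_vanish[OF z] by blast
    moreover have n1: "(i, j) \<notin> idx r \<times> idx r" "(-j, -i) \<notin> idx r \<times> idx r" using False by auto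
    ultimately show ?thesis by (simp only: if_not_P[OF n1(1)] if_not_P[OF n1(2)]) simp
  qed
  finally show "z i j = (\<Sum>x\<in>idx r \<times> idx r. (z (fst x) (snd x) / 2) * Esp (fst x) (snd x) i j)" ..
qed

lemma idx_rank_trichotomy: "p \<in> idx r \<Longrightarrow> q \<in> idx r \<Longrightarrow> p = q \<or> idx_rank r p < idx_rank r q \<or> idx_rank r q < idx_rank r p"
  unfolding idx_rank_def idx_def by auto

lemma xm_in_nminus: "1 \<le> i \<Longrightarrow> i \<le> j \<Longrightarrow> j < int r \<Longrightarrow> xm i j \<in> nminus r"
  unfolding nminus_def nminus_half_def by blast

lemma xmbar_in_nminus:
  assumes "1 \<le> i" "i \<le> j" "j \<le> int r"
  shows "xmbar i j \<in> nminus r"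
proof (cases "j = int r")
  case True
  then have "xmbar i j = xr r (nat i)" "1 \<le> nat i" "nat i \<le> r" using assms by (auto simp: xr_def)
  then show ?thesis unfolding nminus_def by blast
next
  case False
  then have "j < int r" using assms by simp
  then show ?thesis using assms unfolding nminus_def nminus_half_def by blast
qed

lemma xpbar_in_nplus:
  assumes "1 \<le> i" "i \<le> j" "j \<le> int r"
  shows "xpbar i j \<in> nplus r"
proof (cases "i = j")
  case True
  then have "xpbar i j = Emat i (-i)" by (simp add: xpbar_def)
  then show ?thesis using assms True unfolding nplus_def by blast
next
  case False
  then have "i < j" using assms by simp
  then have "xpbar i j = madd (Emat i (-j)) (Emat j (-i))" by (simp add: xpbar_def)
  then show ?thesis using assms \<open>i < j\<close> unfolding nplus_def by blast
qed

lemma Esp_neg_pos_xmbar: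
  "p < 0 \<Longrightarrow> 0 < q \<Longrightarrow> Esp p q = mscale (if q = -p then 2 else 1) (xmbar (min q (-p)) (max q (-p)))"
  by (cases "q < -p") (auto simp: Esp_neg_pos xmbar_def madd_self_eq_mscale mscale_one madd_comm)

lemma Esp_pos_neg_xpbar:
  "0 < p \<Longrightarrow> q < 0 \<Longrightarrow> Esp p q = mscale (if p = -q then 2 else 1) (xpbar (min p (-q)) (max p (-q)))"
  by (cases "p < -q") (auto simp: Esp_pos_neg xpbar_def madd_self_eq_mscale mscale_one madd_comm)

lemma Esp_lower_in_nminus:
  assumes p: "p \<in> idx r" and q: "q \<in> idx r" and rank: "idx_rank r q < idx_rank r p"
  shows "\<exists>c y. y \<in> nminus r \<and> Esp p q = mscale c y"
proof -
  consider "0 < q" "q < p" | "p < 0" "0 < q" | "p < 0" "q < 0" "-p < -q"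
    using p q rank by (auto simp: idx_iff idx_rank_def split: if_splits)
  then show ?thesis
  proof cases
    case 1
    then have "Esp p q = mscale 1 (xm q (p - 1))" by (simp add: Esp_pos_pos xm_def mscale_one)
    moreover have "xm q (p - 1) \<in> nminus r" using 1 p by (intro xm_in_nminus) (auto simp: idx_iff)
    ultimately show ?thesis by blast
  next
    case 2
    have "xmbar (min q (-p)) (max q (-p)) \<in> nminus r"
      using 2 p q by (intro xmbar_in_nminus) (auto simp: idx_iff)
    then show ?thesis using Esp_neg_pos_xmbar[OF 2] by blast
  next
    case 3
    then have "Esp p q = mscale (-1) (xm (-p) (-q - 1))" by (simp add: Esp_neg_neg xm_def)
    moreover have "xm (-p) (-q - 1) \<in> nminus r" using 3 q by (intro xm_in_nminus) (auto simp: idx_iff)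
    ultimately show ?thesis by blast
  qed
qed

lemma Esp_upper_in_nplus:
  assumes p: "p \<in> idx r" and q: "q \<in> idx r" and rank: "idx_rank r p < idx_rank r q"
  shows "\<exists>c e. e \<in> nplus r \<and> Esp p q = mscale c e"
proof -
  consider "0 < p" "p < q" | "0 < p" "q < 0" | "p < 0" "q < 0" "-q < -p"
    using p q rank by (auto simp: idx_iff idx_rank_def split: if_splits)
  then show ?thesis
  proof cases
    case 1
    then have "Esp p q = mscale 1 (msub (Emat p q) (Emat (-q) (-p)))" by (simp add: Esp_pos_pos mscale_one)
    moreover have "msub (Emat p q) (Emat (-q) (-p)) \<in> nplus r"
      using 1 q unfolding nplus_def by (auto simp: idx_iff)
    ultimately show ?thesis by blast
  next
    case 2
    have "xpbar (min p (-q)) (max p (-q)) \<in> nplus r"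
      using 2 p q by (intro xpbar_in_nplus) (auto simp: idx_iff)
    then show ?thesis using Esp_pos_neg_xpbar[OF 2] by blast
  next
    case 3
    then have "Esp p q = mscale (-1) (msub (Emat (-q) (-p)) (Emat (-(-p)) (-(-q))))"
      by (simp add: Esp_neg_neg)
    moreover have "msub (Emat (-q) (-p)) (Emat (-(-p)) (-(-q))) \<in> nplus r"
    proof -
      have "1 \<le> -q" "-q < -p" "-p \<le> int r" using 3 p by (auto simp: idx_iff)
      then show ?thesis unfolding nplus_def by blast
    qed
    ultimately show ?thesis by blast
  qed
qed

lemma Esp_diag_hdiag:
  assumes p: "p \<in> idx r"
  shows "\<exists>j\<in>{1..r}. Esp p p = hdiag j \<or> Esp p p = mscale (-1) (hdiag j)"
proof -
  have pr: "\<bar>p\<bar> \<le> int r" "p \<noteq> 0" using p by (auto simp: idx_def)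
  show ?thesis
  proof (cases "p > 0")
    case True
    then have "Esp p p = hdiag (nat p)" by (simp add: Esp_pos_pos hdiag_def)
    then show ?thesis using True pr by (intro bexI[of _ "nat p"]) auto
  next
    case False
    then have "p < 0" using pr by simp
    then have "Esp p p = mscale (-1) (hdiag (nat (-p)))" by (simp add: Esp_neg_neg hdiag_def)
    then show ?thesis using \<open>p < 0\<close> pr by (intro bexI[of _ "nat (-p)"]) auto
  qed
qed

lemma nplus_in_sp: "e \<in> nplus r \<Longrightarrow> e \<in> sp r"
proof -
  assume "e \<in> nplus r"
  then consider (a) i j where "e = msub (Emat i j) (Emat (-j) (-i))" "1 \<le> i" "i < j" "j \<le> int r"
    | (b) i j where "e = madd (Emat i (-j)) (Emat j (-i))" "1 \<le> i" "i < j" "j \<le> int r"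
    | (c) i where "e = Emat i (-i)" "1 \<le> i" "i \<le> int r"
    unfolding nplus_def by blast
  then show "e \<in> sp r"
  proof cases
    case a
    then have "e = Esp i j" by (simp add: Esp_pos_pos)
    then show ?thesis using a Esp_in_sp[of i r j] by (simp add: idx_def)
  next
    case b
    then have "e = Esp i (-j)" by (simp add: Esp_pos_neg)
    then show ?thesis using b Esp_in_sp[of i r "-j"] by (simp add: idx_def)
  next
    case c
    then have "e = mscale (1/2) (Esp i (-i))" by (simp add: Esp_pos_neg madd_self_eq_mscale mscale_def fun_eq_iff)
    then show ?thesis using c Esp_in_sp[of i r "-i"] sp_mscale by (simp add: idx_def)
  qed
qed

lemma xm_in_sp: "1 \<le> i \<Longrightarrow> i \<le> j \<Longrightarrow> j < int r \<Longrightarrow> xm i j \<in> sp r"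
proof -
  assume a: "1 \<le> i" "i \<le> j" "j < int r"
  have "xm i j = Esp (j + 1) i" using a by (simp add: Esp_pos_pos xm_def)
  then show ?thesis using a Esp_in_sp[of "j+1" r i] by (simp add: idx_def)
qed

lemma xmbar_in_sp: "1 \<le> i \<Longrightarrow> i \<le> j \<Longrightarrow> j \<le> int r \<Longrightarrow> xmbar i j \<in> sp r"
proof -
  assume a: "1 \<le> i" "i \<le> j" "j \<le> int r"
  show ?thesis
  proof (cases "i = j")
    case True
    have "Esp (-i) i = madd (Emat (-i) i) (Emat (-i) i)" using a by (simp add: Esp_neg_pos)
    then have "xmbar i j = mscale (1/2) (Esp (-i) i)" using True by (simp add: xmbar_def madd_self_eq_mscale mscale_def fun_eq_iff)
    then show ?thesis using a Esp_in_sp[of "-i" r i] sp_mscale by (simp add: idx_def)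
  next
    case False
    then have "xmbar i j = Esp (-j) i" using a by (simp add: xmbar_def Esp_neg_pos madd_comm)
    then show ?thesis using a Esp_in_sp[of "-j" r i] by (simp add: idx_def)
  qed
qed

lemma xr_in_sp: "1 \<le> i \<Longrightarrow> i \<le> r \<Longrightarrow> xr r i \<in> sp r"
  unfolding xr_def by (rule xmbar_in_sp) auto

lemma nminus_in_sp: "y \<in> nminus r \<Longrightarrow> y \<in> sp r"
  unfolding nminus_def nminus_half_def xr_def
  by (auto intro!: xm_in_sp xmbar_in_sp)

lemma hdiag_in_sp: "1 \<le> j \<Longrightarrow> j \<le> r \<Longrightarrow> hdiag j \<in> sp r"
  using Esp_in_sp[of "int j" r "int j"] by (simp add: Esp_pos_pos hdiag_def idx_def)

lemma strictly_lower_bracket: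
  assumes A: "strictly_lower r A" and B: "strictly_lower r B"
  shows "strictly_lower r (bracket r A B)"
  unfolding strictly_lower_def
proof (intro allI impI)
  fix p q assume p: "p \<in> idx r" and q: "q \<in> idx r" and k: "idx_rank r p \<le> idx_rank r q"
  show "bracket r A B p q = 0" unfolding bracket_def
  proof (rule sum.neutral, rule ballI)
    fix x assume x: "x \<in> idx r"
    show "A p x * B x q - B p x * A x q = 0"
    proof (cases "idx_rank r p \<le> idx_rank r x")
      case True
      then have "A p x = 0" "B p x = 0" using A B p x unfolding strictly_lower_def by auto
      then show ?thesis by simp
    next
      case False
      then have "idx_rank r x \<le> idx_rank r q" using k by simp
      then have "B x q = 0" "A x q = 0" using A B q x unfolding strictly_lower_def by auto
      then show ?thesis by simp
    qed
  qed
qed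

lemma xm_strictly_lower: "1 \<le> i \<Longrightarrow> i \<le> j \<Longrightarrow> j < int r \<Longrightarrow> strictly_lower r (xm i j)"
  unfolding strictly_lower_def
proof (intro allI impI, rule ccontr)
  fix p q assume a: "1 \<le> i" "i \<le> j" "j < int r" and k: "idx_rank r p \<le> idx_rank r q" and nz: "xm i j p q \<noteq> 0"
  have "Emat (j + 1) i p q \<noteq> 0 \<or> Emat (-i) (-(j+1)) p q \<noteq> 0"
    using msub_nonzero[OF nz[unfolded xm_def]] .
  then have "(p = j + 1 \<and> q = i) \<or> (p = -i \<and> q = -(j+1))"
    using Emat_nonzero by metis
  then show False
  proof
    assume "p = j + 1 \<and> q = i"
    then have "idx_rank r p = j + 1" "idx_rank r q = i" using a by (auto simp: idx_rank_def)
    then show False using k a by linarith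
  next
    assume "p = -i \<and> q = -(j+1)"
    then have "idx_rank r p = 2 * int r + 1 - i" "idx_rank r q = 2 * int r + 1 - (j + 1)" using a by (auto simp: idx_rank_def)
    then show False using k a by linarith
  qed
qed

lemma xmbar_strictly_lower: "1 \<le> i \<Longrightarrow> i \<le> j \<Longrightarrow> j \<le> int r \<Longrightarrow> strictly_lower r (xmbar i j)"
  unfolding strictly_lower_def
proof (intro allI impI, rule ccontr)
  fix p q assume a: "1 \<le> i" "i \<le> j" "j \<le> int r" and k: "idx_rank r p \<le> idx_rank r q" and nz: "xmbar i j p q \<noteq> 0"
  have "(p = -j \<and> q = i) \<or> (p = -i \<and> q = j)"
  proof (cases "i = j")
    case True
    then have "Emat (-i) i p q \<noteq> 0" using nz unfolding xmbar_def by (simp only: if_P simp_thms)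
    then show ?thesis using Emat_nonzero True by metis
  next
    case False
    then have "madd (Emat (-j) i) (Emat (-i) j) p q \<noteq> 0" using nz unfolding xmbar_def by (simp only: if_not_P simp_thms)
    then have "Emat (-j) i p q \<noteq> 0 \<or> Emat (-i) j p q \<noteq> 0" by (rule madd_nonzero)
    then show ?thesis using Emat_nonzero by metis
  qed
  then show False
  proof
    assume "p = -j \<and> q = i"
    then have "idx_rank r p = 2 * int r + 1 - j" "idx_rank r q = i" using a by (auto simp: idx_rank_def)
    then show False using k a by linarith
  next
    assume "p = -i \<and> q = j"
    then have "idx_rank r p = 2 * int r + 1 - i" "idx_rank r q = j" using a by (auto simp: idx_rank_def)
    then show False using k a by linarith
  qed
qed

lemma nminus_strictly_lower: "y \<in> nminus r \<Longrightarrow> strictly_lower r y"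
  unfolding nminus_def nminus_half_def xr_def
  by (auto intro!: xm_strictly_lower xmbar_strictly_lower)

definition lower_left_block :: "mat \<Rightarrow> bool" where
  "lower_left_block A \<longleftrightarrow> (\<forall>i j. A i j \<noteq> 0 \<longrightarrow> i < 0 \<and> j > 0)"

lemma bracket_lower_left_block: "lower_left_block A \<Longrightarrow> lower_left_block B \<Longrightarrow> bracket r A B = (\<lambda>i j. 0)"
  unfolding lower_left_block_def bracket_def
  by (intro ext sum.neutral ballI) (metis less_asym mult_eq_0_iff diff_self)

lemma lower_left_block_Emat: "a < 0 \<Longrightarrow> b > 0 \<Longrightarrow> lower_left_block (Emat a b)"
  unfolding lower_left_block_def using Emat_nonzero by blast

lemma lower_left_block_madd: "lower_left_block A \<Longrightarrow> lower_left_block B \<Longrightarrow> lower_left_block (madd A B)"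
  unfolding lower_left_block_def madd_def by (metis add.left_neutral)

lemma lower_left_block_xmbar: "1 \<le> i \<Longrightarrow> 1 \<le> j \<Longrightarrow> lower_left_block (xmbar i j)"
proof -
  assume a: "1 \<le> i" "1 \<le> j"
  show ?thesis
  proof (cases "i = j")
    case True
    then show ?thesis unfolding xmbar_def using a by (simp only: if_P) (rule lower_left_block_Emat; linarith)
  next
    case False
    then show ?thesis unfolding xmbar_def using a by (simp only: if_not_P if_False) (intro lower_left_block_madd lower_left_block_Emat; linarith)
  qed
qed

section \<open>Brackets needed for the rank-one and rank-two reductions\<close>

lemma bracket_xm11_xr2:
  assumes "r \<ge> 2"
  shows "bracket r (xm 1 1) (xr r 2) = mscale (-1) (xr r 1)"
proof (cases "r = 2")
  case True
  have "bracket r (xm 1 1) (xr r 2) = bracket r (msub (Emat 2 1) (Emat (-1) (-2))) (Emat (-2) 2)"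
    using True by (simp add: xm_def xr_def xmbar_def)
  also have "\<dots> = mscale (-1) (xr r 1)"
    using True by (simp add: bracket_simps idx_iff xr_def xmbar_def) (auto simp: fun_eq_iff mscale_def madd_def msub_def Emat_def)
  finally show ?thesis .
next
  case False
  then have r3: "r \<ge> 3" using assms by simp
  have "bracket r (xm 1 1) (xr r 2) = bracket r (msub (Emat 2 1) (Emat (-1) (-2))) (madd (Emat (- int r) 2) (Emat (-2) (int r)))"
    using r3 by (simp add: xm_def xr_def xmbar_def)
  also have "\<dots> = mscale (-1) (xr r 1)"
    using r3 by (simp add: bracket_simps idx_iff xr_def xmbar_def) (auto simp: fun_eq_iff mscale_def madd_def msub_def Emat_def)
  finally show ?thesis .
qed

lemma bracket_xm11_xr1:
  assumes "r \<ge> 2"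
  shows "bracket r (xm 1 1) (xr r 1) = mscale (- (if r = 2 then 2 else 0)) (xmbar 1 1)"
proof (cases "r = 2")
  case True
  have "bracket r (xm 1 1) (xr r 1) = bracket r (msub (Emat 2 1) (Emat (-1) (-2))) (madd (Emat (-2) 1) (Emat (-1) 2))"
    using True by (simp add: xm_def xr_def xmbar_def)
  also have "\<dots> = mscale (- (if r = 2 then 2 else 0)) (xmbar 1 1)"
    using True by (simp add: bracket_simps idx_iff xmbar_def) (auto simp: fun_eq_iff mscale_def madd_def msub_def Emat_def)
  finally show ?thesis .
next
  case False
  then have r3: "r \<ge> 3" using assms by simp
  have "bracket r (xm 1 1) (xr r 1) = bracket r (msub (Emat 2 1) (Emat (-1) (-2))) (madd (Emat (- int r) 1) (Emat (-1) (int r)))"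
    using r3 by (simp add: xm_def xr_def xmbar_def)
  also have "\<dots> = mscale (- (if r = 2 then 2 else 0)) (xmbar 1 1)"
    using r3 by (simp add: bracket_simps idx_iff xmbar_def) (auto simp: fun_eq_iff mscale_def madd_def msub_def Emat_def)
  finally show ?thesis .
qed

lemma bracket_xm11_xr:
  assumes "3 \<le> j" "j \<le> r"
  shows "bracket r (xm 1 1) (xr r j) = (\<lambda>i j. 0)"
proof (cases "j = r")
  case True
  have "bracket r (xm 1 1) (xr r j) = bracket r (msub (Emat 2 1) (Emat (-1) (-2))) (Emat (- int r) (int r))"
    using True by (simp add: xm_def xr_def xmbar_def)
  also have "\<dots> = (\<lambda>i j. 0)"
    using assms by (simp add: bracket_simps idx_iff) (auto simp: fun_eq_iff madd_def msub_def Emat_def)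
  finally show ?thesis .
next
  case False
  have "bracket r (xm 1 1) (xr r j) = bracket r (msub (Emat 2 1) (Emat (-1) (-2))) (madd (Emat (- int r) (int j)) (Emat (- int j) (int r)))"
    using False by (simp add: xm_def xr_def xmbar_def)
  also have "\<dots> = (\<lambda>i j. 0)"
    using assms by (simp add: bracket_simps idx_iff) (auto simp: fun_eq_iff madd_def msub_def Emat_def)
  finally show ?thesis .
qed

lemma bracket_sl2_ef:
  assumes "r \<ge> 2"
  shows "bracket r (msub (Emat 1 2) (Emat (-2) (-1))) (xm 1 1) = (\<lambda>i j. 1 * hdiag 1 i j + (-1) * hdiag 2 i j)"
proof -
  have "bracket r (msub (Emat 1 2) (Emat (-2) (-1))) (xm 1 1) = bracket r (msub (Emat 1 2) (Emat (-2) (-1))) (msub (Emat 2 1) (Emat (-1) (-2)))"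
    by (simp add: xm_def)
  also have "\<dots> = (\<lambda>i j. 1 * hdiag 1 i j + (-1) * hdiag 2 i j)"
    using assms by (simp add: bracket_simps idx_iff) (auto simp: fun_eq_iff madd_def msub_def Emat_def hdiag_def)
  finally show ?thesis .
qed

lemma bracket_sl2_hf:
  assumes "r \<ge> 2"
  shows "bracket r (\<lambda>i j. 1 * hdiag 1 i j + (-1) * hdiag 2 i j) (xm 1 1) = mscale (-2) (xm 1 1)"
proof -
  have "(\<lambda>i j. 1 * hdiag 1 i j + (-1) * hdiag 2 i j) = msub (madd (Emat 1 1) (Emat (-2) (-2))) (madd (Emat (-1) (-1)) (Emat 2 2))"
    by (auto simp: fun_eq_iff hdiag_def madd_def msub_def Emat_def)
  then have "bracket r (\<lambda>i j. 1 * hdiag 1 i j + (-1) * hdiag 2 i j) (xm 1 1) =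
     bracket r (msub (madd (Emat 1 1) (Emat (-2) (-2))) (madd (Emat (-1) (-1)) (Emat 2 2))) (msub (Emat 2 1) (Emat (-1) (-2)))"
    by (simp add: xm_def)
  also have "\<dots> = mscale (-2) (xm 1 1)"
    using assms by (simp add: bracket_simps idx_iff xm_def) (auto simp: fun_eq_iff madd_def msub_def Emat_def mscale_def)
  finally show ?thesis .
qed

lemma bracket_rank1_ef:
  assumes "r \<ge> 1"
  shows "bracket r (Emat 1 (-1)) (Emat (-1) 1) = hdiag 1"
  using assms by (simp add: bracket_simps idx_iff) (auto simp: fun_eq_iff hdiag_def msub_def Emat_def)

lemma bracket_rank1_hf:
  assumes "r \<ge> 1"
  shows "bracket r (hdiag 1) (Emat (-1) 1) = mscale (-2) (Emat (-1) 1)"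
  using assms by (simp add: bracket_simps idx_iff hdiag_def) (auto simp: fun_eq_iff msub_def Emat_def mscale_def)

section \<open>Representations\<close>

lemma act_list_Nil [simp]: "act_list \<rho> [] w = w"
  by (simp add: act_list_def)

lemma act_list_Cons [simp]: "act_list \<rho> (y # ys) w = \<rho> y *v act_list \<rho> ys w"
  by (simp add: act_list_def)

definition words :: "(mat \<Rightarrow> complex^'n^'n) \<Rightarrow> mat set \<Rightarrow> complex^'n \<Rightarrow> (complex^'n) set" where
  "words \<rho> S v = {act_list \<rho> ys v | ys. set ys \<subseteq> S}"

lemma self_in_words: "v \<in> words \<rho> S v"
  unfolding words_def by (metis (mono_tags, lifting) act_list_Nil empty_subsetI empty_set mem_Collect_eq)

lemma mult_in_words: "y \<in> S \<Longrightarrow> w \<in> words \<rho> S v \<Longrightarrow> \<rho> y *v w \<in> words \<rho> S v"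
  unfolding words_def by (force intro: exI[of _ "y # ys" for ys])

lemma mult_in_span_words:
  assumes "y \<in> S" and w: "w \<in> vec.span (words \<rho> S v)"
  shows "\<rho> y *v w \<in> vec.span (words \<rho> S v)"
  by (rule matrix_vector_mult_in_span[OF _ w]) (auto intro: vec.span_base mult_in_words assms(1))

lemma xmono_mvmono: "xmono r \<rho> k v = mvmono (\<lambda>i. \<rho> (xr r i)) k [1..<r+1] v"
  by (simp add: xmono_def mvmono_def mvpow_def)

definition half_words :: "nat \<Rightarrow> (mat \<Rightarrow> complex^'n^'n) \<Rightarrow> (nat \<Rightarrow> nat) \<Rightarrow> complex^'n \<Rightarrow> (complex^'n) set" where
  "half_words r \<rho> m v = (\<Union>k \<in> {k. k 1 \<le> m 1}. words \<rho> (nminus_half r) (xmono r \<rho> k v))"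

lemma xmono_in_span_half_words_base: "k 1 \<le> m 1 \<Longrightarrow> xmono r \<rho> k v \<in> vec.span (half_words r \<rho> m v)"
  unfolding half_words_def by (intro vec.span_base) (auto intro: self_in_words)

lemma mult_in_span_half_words:
  assumes y: "y \<in> nminus_half r" and w: "w \<in> vec.span (half_words r \<rho> m v)"
  shows "\<rho> y *v w \<in> vec.span (half_words r \<rho> m v)"
  by (rule matrix_vector_mult_in_span[OF _ w]) (auto simp: half_words_def intro: vec.span_base mult_in_words[OF y])

lemma act_list_in_span_half_words:
  "set ys \<subseteq> nminus_half r \<Longrightarrow> w \<in> vec.span (half_words r \<rho> m v) \<Longrightarrow> act_list \<rho> ys w \<in> vec.span (half_words r \<rho> m v)"
  by (induction ys) (auto intro: mult_in_span_half_words)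

lemma xmono_split:
  assumes "2 \<le> r"
  shows "xmono r \<rho> k v = mvpow (\<rho> (xr r 1)) (k 1) (mvpow (\<rho> (xr r 2)) (k 2)
           (mvmono (\<lambda>i. \<rho> (xr r i)) k [3..<r+1] v))"
proof -
  have "[1..<r+1] = 1 # 2 # [3..<r+1]"
    using assms by (simp add: upt_conv_Cons numeral_eq_Suc)
  then show ?thesis unfolding xmono_mvmono by simp
qed

context
  fixes r :: nat and \<rho> :: "mat \<Rightarrow> complex^'n^'n"
  assumes rep: "is_rep r \<rho>"
begin

lemma rep_lincomb: "A \<in> sp r \<Longrightarrow> B \<in> sp r \<Longrightarrow>
   \<rho> (\<lambda>i j. a * A i j + b * B i j) *v w = a *s (\<rho> A *v w) + b *s (\<rho> B *v w)"
  using rep unfolding is_rep_def by blast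

lemma rep_bracket: "A \<in> sp r \<Longrightarrow> B \<in> sp r \<Longrightarrow>
   \<rho> (bracket r A B) *v w = \<rho> A *v (\<rho> B *v w) - \<rho> B *v (\<rho> A *v w)"
  using rep unfolding is_rep_def by blast

lemma rep_zero: "\<rho> (\<lambda>i j. 0) *v w = 0"
  using rep_lincomb[OF sp_zero sp_zero, of 0 0 w] by simp

lemma rep_mscale: "A \<in> sp r \<Longrightarrow> \<rho> (mscale c A) *v w = c *s (\<rho> A *v w)"
  using rep_lincomb[of A A c 0 w] unfolding mscale_def by simp

lemma rep_sum: "finite F \<Longrightarrow> (\<And>t. t \<in> F \<Longrightarrow> A t \<in> sp r) \<Longrightarrow>
   \<rho> (\<lambda>i j. \<Sum>t\<in>F. c t * A t i j) *v w = (\<Sum>t\<in>F. c t *s (\<rho> (A t) *v w))"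
proof (induction F rule: finite_induct)
  case empty then show ?case by (simp add: rep_zero)
next
  case (insert x F)
  have "\<rho> (\<lambda>i j. c x * A x i j + 1 * (\<Sum>t\<in>F. c t * A t i j)) *v w
     = c x *s (\<rho> (A x) *v w) + 1 *s (\<rho> (\<lambda>i j. \<Sum>t\<in>F. c t * A t i j) *v w)"
    using insert by (intro rep_lincomb sp_sum) auto
  then show ?case using insert by simp
qed

lemma rep_commute_of_bracket_zero:
  "A \<in> sp r \<Longrightarrow> B \<in> sp r \<Longrightarrow> bracket r A B = (\<lambda>i j. 0) \<Longrightarrow> \<rho> A *v (\<rho> B *v w) = \<rho> B *v (\<rho> A *v w)"
  using rep_bracket[of A B w] rep_zero[of w] by simp

lemma rep_Esp_expansion:
  assumes "z \<in> sp r"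
  shows "\<rho> z *v w = (\<Sum>x\<in>idx r \<times> idx r. (z (fst x) (snd x) / 2) *s (\<rho> (Esp (fst x) (snd x)) *v w))"
  by (subst sp_Esp_expansion[OF assms]) (rule rep_sum, auto intro: Esp_in_sp)

lemma rep_Esp_lower_in_subspace:
  assumes W: "vec.subspace W" and nminus_u: "\<And>y. y \<in> nminus r \<Longrightarrow> \<rho> y *v u \<in> W"
    and p: "p \<in> idx r" and q: "q \<in> idx r" and rank: "idx_rank r q < idx_rank r p"
  shows "\<rho> (Esp p q) *v u \<in> W"
proof -
  obtain c y where y: "y \<in> nminus r" and "Esp p q = mscale c y"
    using Esp_lower_in_nminus[OF p q rank] by blast
  then have "\<rho> (Esp p q) *v u = c *s (\<rho> y *v u)" by (simp add: rep_mscale nminus_in_sp)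
  then show ?thesis using W nminus_u[OF y] by (simp add: vec.subspace_scale)
qed

lemma rep_strictly_lower_in_subspace:
  assumes W: "vec.subspace W" and nminus_u: "\<And>y. y \<in> nminus r \<Longrightarrow> \<rho> y *v u \<in> W"
    and z: "z \<in> sp r" "strictly_lower r z"
  shows "\<rho> z *v u \<in> W"
  unfolding rep_Esp_expansion[OF z(1)]
proof (rule vec.subspace_sum[OF W])
  fix x assume x: "x \<in> idx r \<times> idx r"
  show "(z (fst x) (snd x) / 2) *s (\<rho> (Esp (fst x) (snd x)) *v u) \<in> W"
  proof (cases "idx_rank r (snd x) < idx_rank r (fst x)")
    case True
    then show ?thesis using rep_Esp_lower_in_subspace[OF W nminus_u] x W by (auto intro: vec.subspace_scale)
  next
    case False
    then have "z (fst x) (snd x) = 0" using z(2) x unfolding strictly_lower_def by auto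
    then show ?thesis using W by (simp add: vec.subspace_0)
  qed
qed

lemma rep_xr_commute:
  "1 \<le> i \<Longrightarrow> i \<le> r \<Longrightarrow> 1 \<le> j \<Longrightarrow> j \<le> r \<Longrightarrow>
   \<rho> (xr r i) *v (\<rho> (xr r j) *v w) = \<rho> (xr r j) *v (\<rho> (xr r i) *v w)"
  by (intro rep_commute_of_bracket_zero xr_in_sp bracket_lower_left_block)
    (auto simp: xr_def intro!: lower_left_block_xmbar)

lemma rep_xr_xmono:
  "1 \<le> i \<Longrightarrow> i \<le> r \<Longrightarrow> \<rho> (xr r i) *v xmono r \<rho> k v = xmono r \<rho> (k(i := Suc (k i))) v"
  unfolding xmono_mvmono
  by (rule mv_mvmono_shift) (auto intro: rep_xr_commute)

lemma rep_xm11_xr2: "2 \<le> r \<Longrightarrow>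
    \<rho> (xm 1 1) *v (\<rho> (xr r 2) *v w) - \<rho> (xr r 2) *v (\<rho> (xm 1 1) *v w) = - (\<rho> (xr r 1) *v w)"
  using rep_bracket[of "xm 1 1" "xr r 2" w] rep_mscale[of "xr r 1" "-1" w] bracket_xm11_xr2
  by (simp add: xm_in_sp xr_in_sp)

lemma rep_xm11_xr1: "2 \<le> r \<Longrightarrow>
    \<rho> (xm 1 1) *v (\<rho> (xr r 1) *v w) - \<rho> (xr r 1) *v (\<rho> (xm 1 1) *v w)
      = - ((if r = 2 then 2 else 0) *s (\<rho> (xmbar 1 1) *v w))"
  using rep_bracket[of "xm 1 1" "xr r 1" w] bracket_xm11_xr1
    rep_mscale[of "xmbar 1 1" "- (if r = 2 then 2 else 0)" w]
  by (simp add: xm_in_sp xr_in_sp xmbar_in_sp vec.scale_minus_left)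

lemma rep_xmbar11_xr1_commute: "1 \<le> r \<Longrightarrow>
    \<rho> (xmbar 1 1) *v (\<rho> (xr r 1) *v w) = \<rho> (xr r 1) *v (\<rho> (xmbar 1 1) *v w)"
  by (intro rep_commute_of_bracket_zero xmbar_in_sp xr_in_sp bracket_lower_left_block)
    (auto simp: xr_def intro!: lower_left_block_xmbar)

lemma rep_xm11_xr_commute: "3 \<le> j \<Longrightarrow> j \<le> r \<Longrightarrow>
    \<rho> (xm 1 1) *v (\<rho> (xr r j) *v w) = \<rho> (xr r j) *v (\<rho> (xm 1 1) *v w)"
  by (intro rep_commute_of_bracket_zero xm_in_sp xr_in_sp bracket_xm11_xr) auto

context
  fixes m :: "nat \<Rightarrow> nat" and v :: "complex^'n"
  assumes hw: "is_hwv r m \<rho> v"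
begin

lemma hwv_hdiag: "1 \<le> j \<Longrightarrow> j \<le> r \<Longrightarrow> \<rho> (hdiag j) *v v = of_nat (\<Sum>i\<in>{j..r}. m i) *s v"
  using hw unfolding is_hwv_def hdiag_def by auto

lemma hwv_nplus: "e \<in> nplus r \<Longrightarrow> \<rho> e *v v = 0"
  using hw unfolding is_hwv_def by blast

lemma rep_Esp_diag_hwv:
  assumes "p \<in> idx r"
  shows "\<exists>c. \<rho> (Esp p p) *v v = c *s v"
proof -
  obtain j where j: "1 \<le> j" "j \<le> r" and "Esp p p = hdiag j \<or> Esp p p = mscale (-1) (hdiag j)"
    using Esp_diag_hdiag[OF assms] by auto
  then have "\<rho> (Esp p p) *v v = \<rho> (hdiag j) *v v \<or> \<rho> (Esp p p) *v v = (-1) *s (\<rho> (hdiag j) *v v)"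
    by (auto simp: rep_mscale hdiag_in_sp)
  then show ?thesis using hwv_hdiag[OF j] by (metis vec.scale_scale)
qed

lemma rep_Esp_upper_hwv:
  assumes "p \<in> idx r" "q \<in> idx r" "idx_rank r p < idx_rank r q"
  shows "\<rho> (Esp p q) *v v = 0"
  using Esp_upper_in_nplus[OF assms] by (auto simp: rep_mscale nplus_in_sp hwv_nplus)

lemma rep_in_span_nminus_words:
  assumes z: "z \<in> sp r"
  shows "\<rho> z *v v \<in> vec.span (words \<rho> (nminus r) v)"
  unfolding rep_Esp_expansion[OF z]
proof (intro vec.span_sum vec.span_scale)
  fix x assume "x \<in> idx r \<times> idx r"
  then obtain p q where x: "x = (p, q)" and p: "p \<in> idx r" and q: "q \<in> idx r" by auto
  have v: "v \<in> vec.span (words \<rho> (nminus r) v)" by (intro vec.span_base self_in_words)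
  consider "p = q" | "idx_rank r p < idx_rank r q" | "idx_rank r q < idx_rank r p"
    using idx_rank_trichotomy[OF p q] by blast
  then show "\<rho> (Esp (fst x) (snd x)) *v v \<in> vec.span (words \<rho> (nminus r) v)"
  proof cases
    case 1
    then show ?thesis using rep_Esp_diag_hwv[OF p] v x by (auto intro: vec.span_scale)
  next
    case 2
    then show ?thesis using rep_Esp_upper_hwv[OF p q] x by (simp add: vec.span_zero)
  next
    case 3
    then show ?thesis unfolding x fst_conv snd_conv
      by (intro rep_Esp_lower_in_subspace[OF vec.subspace_span _ p q] mult_in_span_words v)
  qed
qed

lemma rep_act_list_in_span_nminus_words:
  "set ys \<subseteq> nminus r \<Longrightarrow> z \<in> sp r \<Longrightarrow> \<rho> z *v act_list \<rho> ys v \<in> vec.span (words \<rho> (nminus r) v)"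
proof (induction ys arbitrary: z)
  case Nil
  then show ?case by (simp add: rep_in_span_nminus_words)
next
  case (Cons y ys)
  let ?u = "act_list \<rho> ys v"
  have y: "y \<in> nminus r" "y \<in> sp r" using Cons.prems nminus_in_sp by auto
  have "\<rho> z *v act_list \<rho> (y # ys) v = \<rho> (bracket r z y) *v ?u + \<rho> y *v (\<rho> z *v ?u)"
    using rep_bracket[OF Cons.prems(2) y(2), of ?u] by (simp add: algebra_simps)
  moreover have "\<rho> (bracket r z y) *v ?u \<in> vec.span (words \<rho> (nminus r) v)"
    using Cons sp_bracket y by auto
  moreover have "\<rho> y *v (\<rho> z *v ?u) \<in> vec.span (words \<rho> (nminus r) v)"
    using Cons y by (auto intro: mult_in_span_words)
  ultimately show ?case by (simp add: vec.span_add)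
qed

lemma span_nminus_words:
  assumes irr: "irreducible_rep r \<rho>"
  shows "vec.span (words \<rho> (nminus r) v) = UNIV"
proof -
  have "invariant_subspace r \<rho> (vec.span (words \<rho> (nminus r) v))"
    unfolding invariant_subspace_def
  proof (intro conjI ballI vec.subspace_span)
    fix A w assume A: "A \<in> sp r" and w: "w \<in> vec.span (words \<rho> (nminus r) v)"
    show "\<rho> A *v w \<in> vec.span (words \<rho> (nminus r) v)"
    proof (rule matrix_vector_mult_in_span[OF _ w])
      fix s assume "s \<in> words \<rho> (nminus r) v"
      then obtain ys where "set ys \<subseteq> nminus r" "s = act_list \<rho> ys v" unfolding words_def by blast
      then show "\<rho> A *v s \<in> vec.span (words \<rho> (nminus r) v)"
        using rep_act_list_in_span_nminus_words A by blast
    qed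
  qed
  moreover have "v \<in> vec.span (words \<rho> (nminus r) v)" by (intro vec.span_base self_in_words)
  moreover have "v \<noteq> 0" using hw unfolding is_hwv_def by blast
  ultimately show ?thesis using irr unfolding irreducible_rep_def by blast
qed

lemma rank1_lowering_nilpotent:
  assumes r: "r = 1"
  shows "mvpow (\<rho> (Emat (-1) 1)) (Suc (m 1)) v = 0"
proof (rule sl2_lowering_nilpotent)
  have e: "Emat 1 (-1) \<in> nplus r" using r unfolding nplus_def by force
  have f: "Emat (-1) 1 \<in> sp r" using xmbar_in_sp[of 1 1 r] r by (simp add: xmbar_def)
  have h: "hdiag 1 \<in> sp r" using r by (intro hdiag_in_sp) auto
  show "\<rho> (Emat 1 (-1)) *v (\<rho> (Emat (-1) 1) *v w) - \<rho> (Emat (-1) 1) *v (\<rho> (Emat 1 (-1)) *v w)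
      = \<rho> (hdiag 1) *v w" for w
    using rep_bracket[OF nplus_in_sp[OF e] f, of w] bracket_rank1_ef[of r] r by simp
  show "\<rho> (hdiag 1) *v (\<rho> (Emat (-1) 1) *v w) - \<rho> (Emat (-1) 1) *v (\<rho> (hdiag 1) *v w)
      = (-2) *s (\<rho> (Emat (-1) 1) *v w)" for w
    using rep_bracket[OF h f, of w] bracket_rank1_hf[of r] rep_mscale[OF f, of "-2" w] r by simp
  show "\<rho> (Emat 1 (-1)) *v v = 0" by (rule hwv_nplus[OF e])
  show "\<rho> (hdiag 1) *v v = of_nat (m 1) *s v" using hwv_hdiag[of 1] r by simp
qed

lemma xm11_nilpotent:
  assumes r: "2 \<le> r"
  shows "mvpow (\<rho> (xm 1 1)) (Suc (m 1)) v = 0"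
proof (rule sl2_lowering_nilpotent)
  let ?e = "msub (Emat 1 2) (Emat (-2) (-1))" and ?h = "\<lambda>i j. 1 * hdiag 1 i j + (-1) * hdiag 2 i j"
  have e: "?e \<in> nplus r" using r unfolding nplus_def by force
  have f: "xm 1 1 \<in> sp r" using r by (intro xm_in_sp) auto
  have h12: "hdiag 1 \<in> sp r" "hdiag 2 \<in> sp r" using r by (auto intro: hdiag_in_sp)
  show "\<rho> ?e *v (\<rho> (xm 1 1) *v w) - \<rho> (xm 1 1) *v (\<rho> ?e *v w) = \<rho> ?h *v w" for w
    using rep_bracket[OF nplus_in_sp[OF e] f, of w] bracket_sl2_ef[OF r] by simp
  show "\<rho> ?h *v (\<rho> (xm 1 1) *v w) - \<rho> (xm 1 1) *v (\<rho> ?h *v w) = (-2) *s (\<rho> (xm 1 1) *v w)" for w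
    using rep_bracket[OF sp_lincomb[OF h12, of 1 "-1"] f, of w] bracket_sl2_hf[OF r] rep_mscale[OF f, of "-2" w]
    by simp
  show "\<rho> ?e *v v = 0" by (rule hwv_nplus[OF e])
  have "(\<Sum>i\<in>{1..r}. m i) = m 1 + (\<Sum>i\<in>{2..r}. m i)"
    using r by (simp add: sum.atLeast_Suc_atMost numeral_2_eq_2)
  then show "\<rho> ?h *v v = of_nat (m 1) *s v"
    using rep_lincomb[OF h12, of 1 "-1" v] hwv_hdiag[of 1] hwv_hdiag[of 2] r
    by (simp add: vec.scale_left_diff_distrib[symmetric])
qed

lemma xmono_in_span_half_words_rank1:
  assumes r: "r = 1"
  shows "xmono r \<rho> k v \<in> vec.span (half_words r \<rho> m v)"
proof (cases "k 1 \<le> m 1")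
  case True then show ?thesis by (rule xmono_in_span_half_words_base)
next
  case False
  have "xmono r \<rho> k v = mvpow (\<rho> (Emat (-1) 1)) (k 1) v"
    unfolding xmono_mvmono using r by (simp add: xr_def xmbar_def)
  also have "\<dots> = 0"
    using False by (intro mvpow_vanishes_beyond[OF rank1_lowering_nilpotent[OF r]]) simp
  finally show ?thesis by (simp add: vec.span_zero)
qed

lemma xmono_in_span_half_words_rank2:
  assumes r: "2 \<le> r"
  shows "xmono r \<rho> k v \<in> vec.span (half_words r \<rho> m v)"
proof -
  define tail where "tail k' = mvmono (\<lambda>i. \<rho> (xr r i)) k' [3..<r+1] v" for k'
  have split: "xmono r \<rho> k' v = mvpow (\<rho> (xr r 1)) (k' 1) (mvpow (\<rho> (xr r 2)) (k' 2) (tail k'))" for k'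
    unfolding tail_def by (rule xmono_split[OF r])
  have "mvpow (\<rho> (xm 1 1)) (Suc (m 1)) (tail k)
      = mvmono (\<lambda>i. \<rho> (xr r i)) k [3..<r+1] (mvpow (\<rho> (xm 1 1)) (Suc (m 1)) v)"
    unfolding tail_def by (rule mvpow_mvmono_commute) (auto intro: rep_xm11_xr_commute)
  then have tail_nil: "mvpow (\<rho> (xm 1 1)) (Suc (m 1)) (tail k) = 0"
    by (simp only: xm11_nilpotent[OF r] mvmono_zero)
  have base: "mvpow (\<rho> (xr r 1)) a (mvpow (\<rho> (xr r 2)) c (tail k)) \<in> vec.span (half_words r \<rho> m v)"
    if "a \<le> m 1" for a c
  proof -
    have "tail (k(1 := a, 2 := c)) = tail k" unfolding tail_def by (intro mvmono_cong) auto
    then have "xmono r \<rho> (k(1 := a, 2 := c)) v = mvpow (\<rho> (xr r 1)) a (mvpow (\<rho> (xr r 2)) c (tail k))"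
      unfolding split by simp
    then show ?thesis using xmono_in_span_half_words_base[of "k(1 := a, 2 := c)" m r \<rho> v] that by simp
  qed
  have fN: "xm 1 1 \<in> nminus_half r" and gN: "xmbar 1 1 \<in> nminus_half r"
    unfolding nminus_half_def using r by force+
  show ?thesis unfolding split using r
    by (intro raising_monomials_in_subspace[OF rep_xm11_xr2 rep_xm11_xr1 rep_xr_commute
        rep_xmbar11_xr1_commute vec.subspace_span _ _ tail_nil base])
      (auto intro: mult_in_span_half_words[OF fN] mult_in_span_half_words[OF gN])
qed

lemma xmono_in_span_half_words:
  "1 \<le> r \<Longrightarrow> xmono r \<rho> k v \<in> vec.span (half_words r \<rho> m v)"
  using xmono_in_span_half_words_rank1 xmono_in_span_half_words_rank2 by (cases "r = 1") auto

lemma rep_xr_act_list_in_span_half_words: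
  assumes r: "1 \<le> r" and ys: "set ys \<subseteq> nminus_half r" and i: "1 \<le> i" "i \<le> r"
  shows "\<rho> (xr r i) *v act_list \<rho> ys (xmono r \<rho> k v) \<in> vec.span (half_words r \<rho> m v)"
  using ys i
proof (induction ys arbitrary: i)
  case Nil
  then show ?case using rep_xr_xmono xmono_in_span_half_words[OF r] by simp
next
  case (Cons y ys)
  let ?u = "act_list \<rho> ys (xmono r \<rho> k v)" and ?W = "vec.span (half_words r \<rho> m v)"
  have y: "y \<in> nminus_half r" "y \<in> nminus r" "y \<in> sp r"
    using Cons.prems nminus_in_sp unfolding nminus_def by auto
  have x: "xr r i \<in> nminus r" "xr r i \<in> sp r"
    using Cons.prems xr_in_sp unfolding nminus_def by auto
  have u: "?u \<in> ?W" using Cons.prems xmono_in_span_half_words[OF r] by (intro act_list_in_span_half_words) auto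
  have nminus_u: "\<rho> y' *v ?u \<in> ?W" if "y' \<in> nminus r" for y'
  proof -
    from that consider "y' \<in> nminus_half r" | j where "y' = xr r j" "1 \<le> j" "j \<le> r"
      unfolding nminus_def by blast
    then show ?thesis
    proof cases
      case 1 then show ?thesis using u by (rule mult_in_span_half_words)
    next
      case 2 then show ?thesis using Cons.IH[of j] Cons.prems(1) by simp
    qed
  qed
  have "strictly_lower r (bracket r (xr r i) y)"
    using x y by (intro strictly_lower_bracket nminus_strictly_lower)
  then have "\<rho> (bracket r (xr r i) y) *v ?u \<in> ?W"
    using x y by (intro rep_strictly_lower_in_subspace[OF vec.subspace_span nminus_u] sp_bracket)
  moreover have "\<rho> y *v (\<rho> (xr r i) *v ?u) \<in> ?W"
    using Cons by (intro mult_in_span_half_words[OF y(1)]) auto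
  moreover have "\<rho> (xr r i) *v act_list \<rho> (y # ys) (xmono r \<rho> k v)
      = \<rho> (bracket r (xr r i) y) *v ?u + \<rho> y *v (\<rho> (xr r i) *v ?u)"
    using rep_bracket[OF x(2) y(3), of ?u] by (simp add: algebra_simps)
  ultimately show ?case by (simp add: vec.span_add)
qed

lemma mult_in_span_half_words_nminus:
  assumes r: "1 \<le> r" and y: "y \<in> nminus r" and w: "w \<in> vec.span (half_words r \<rho> m v)"
  shows "\<rho> y *v w \<in> vec.span (half_words r \<rho> m v)"
  using y unfolding nminus_def
proof (elim UnE CollectE exE conjE)
  assume "y \<in> nminus_half r"
  then show ?thesis using w by (rule mult_in_span_half_words)
next
  fix i assume y: "y = xr r i" "1 \<le> i" "i \<le> r"
  show ?thesis
  proof (rule matrix_vector_mult_in_span[OF _ w])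
    fix s assume "s \<in> half_words r \<rho> m v"
    then obtain ys k where "s = act_list \<rho> ys (xmono r \<rho> k v)" "set ys \<subseteq> nminus_half r"
      unfolding half_words_def words_def by blast
    then show "\<rho> y *v s \<in> vec.span (half_words r \<rho> m v)"
      using rep_xr_act_list_in_span_half_words[OF r] y by blast
  qed
qed

end

end

theorem lemma4p5:
  fixes r :: nat and m :: "nat \<Rightarrow> nat"
    and \<rho> :: "mat \<Rightarrow> complex^'n^'n" and v :: "complex^'n"
  assumes "r \<ge> 1"
    and "is_rep r \<rho>"
    and "irreducible_rep r \<rho>"
    and "is_hwv r m \<rho> v"
  shows "vec.span {act_list \<rho> ys (xmono r \<rho> k v) | ys k.
                    set ys \<subseteq> nminus_half r \<and> k 1 \<le> m 1} = UNIV"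
proof -
  note r = assms(1) and rep = assms(2) and irr = assms(3) and hw = assms(4)
  let ?W = "vec.span (half_words r \<rho> m v)"
  have "xmono r \<rho> (\<lambda>_. 0) v = v" unfolding xmono_mvmono by (rule mvmono_0)
  then have v: "v \<in> ?W" using xmono_in_span_half_words[OF rep hw r, of "\<lambda>_. 0"] by simp
  have "act_list \<rho> ys v \<in> ?W" if "set ys \<subseteq> nminus r" for ys
    using that by (induction ys) (auto simp: v intro: mult_in_span_half_words_nminus[OF rep hw r])
  then have "vec.span (words \<rho> (nminus r) v) \<subseteq> ?W"
    by (intro vec.span_minimal) (auto simp: words_def)
  moreover have "half_words r \<rho> m v = {act_list \<rho> ys (xmono r \<rho> k v) | ys k.
                    set ys \<subseteq> nminus_half r \<and> k 1 \<le> m 1}"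
    unfolding half_words_def words_def by blast
  ultimately show ?thesis using span_nminus_words[OF rep hw irr] by auto
qed

end
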